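(* Let $f:\mathbb{R}^d\to\mathbb{R}$ satisfy $|f(x)|\le1$ for all $x$, fix $\ell>0$, and let $f_\sim$ satisfy $\sup_x|f(x)-f_\sim(x)|\le\varepsilon$. Let $y\in\mathbb{R}^d$ and $m\ge1$. Draw independently $x_1,\dots,x_m\sim\mathcal N(0,\ell^2I_d)$, let $c_j=f_\sim(x_j)e^{-\mathrm{i}y^\top x_j}$ and $V=\ell^d\cdot\frac{c_1+\dots+c_m}{m}$. Then for any $\delta\in(0,1)$, with probability at least $1-\delta$, $$\big|V-\widehat{f^{(\ell)}}(y)\big|\le 4\ell^d\Big(\varepsilon+\sqrt{\tfrac{2\log(8/\delta)}{m}}\Big).$$
   Context: Fourier transform: $\widehat g(y)=(2\pi)^{-d/2}\int_{\mathbb{R}^d}e^{-\mathrm{i}y^\top x}g(x)\,dx$. $f^{(\ell)}(x)=f(x)e^{-\|x\|^2/(2\ell^2)}$. *)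

theory Defs
  imports "HOL-Probability.Probability"
begin

definition fourier :: "('a::euclidean_space \<Rightarrow> complex) \<Rightarrow> 'a \<Rightarrow> complex" where
  "fourier g y = complex_of_real ((2 * pi) powr (- real DIM('a) / 2)) *
      (LINT x|lborel. cis (- (y \<bullet> x)) * g x)"

definition damp :: "real \<Rightarrow> ('a::euclidean_space \<Rightarrow> real) \<Rightarrow> 'a \<Rightarrow> real" where
  "damp l f x = f x * exp (- (norm x ^ 2) / (2 * l ^ 2))"

definition gaussian_measure :: "real \<Rightarrow> 'a::euclidean_space measure" where
  "gaussian_measure l = density lborel
     (\<lambda>x. ennreal ((2 * pi * l ^ 2) powr (- real DIM('a) / 2) * exp (- (norm x ^ 2) / (2 * l ^ 2))))"

definition estimator :: "real \<Rightarrow> ('a::euclidean_space \<Rightarrow> real) \<Rightarrow> 'a \<Rightarrow> nat \<Rightarrow> (nat \<Rightarrow> 'a) \<Rightarrow> complex" where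
  "estimator l fs y m xs = complex_of_real (l ^ DIM('a)) *
      ((\<Sum>j<m. complex_of_real (fs (xs j)) * cis (- (y \<bullet> xs j))) / of_nat m)"

end

theory Submission
  imports Defs
begin

(* The density of N(0, l^2 I) is (2 pi l^2)^(-d/2) exp(-|x|^2/(2 l^2)), so the Fourier transform
   of the damped f is l^d times the expectation of g(x) = f(x) exp(-i y.x) under that Gaussian,
   while the estimator is l^d times the sample mean of fs(x_j) exp(-i y.x_j), which is within
   l^d eps of the sample mean of g.  The real and imaginary parts of g take values in [-1, 1],
   so by Hoeffding's inequality each of their sample means deviates from its expectation by at
   least s with probability at most 2 exp(-m s^2/2); outside these two events the complex sample
   mean of g is within 2s of its expectation.  Taking s = sqrt(2 log(8/delta)/m) makes the total
   failure probability delta/2. *)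

lemma powr_minus_half_eq_power:
  fixes c :: real
  assumes "c > 0"
  shows "c powr (- real n / 2) = (1 / sqrt c) ^ n"
proof -
  have "1 / sqrt c = c powr (- (1 / 2))"
    using assms by (simp add: powr_minus_divide powr_half_sqrt)
  then have "(1 / sqrt c) ^ n = c powr (- (1 / 2) * real n)"
    using assms by (simp add: powr_realpow[symmetric] powr_powr)
  then show ?thesis by simp
qed

lemma gaussian_density_eq_prod_normal_density:
  fixes x :: "'a::euclidean_space"
  assumes "l > 0"
  shows "(2 * pi * l ^ 2) powr (- real DIM('a) / 2) * exp (- (norm x ^ 2) / (2 * l ^ 2))
           = (\<Prod>b\<in>Basis. normal_density 0 l (x \<bullet> b))"
proof -
  have "norm x ^ 2 = (\<Sum>b\<in>Basis. (x \<bullet> b) ^ 2)"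
    unfolding power2_norm_eq_inner by (subst euclidean_inner) (simp add: power2_eq_square)
  then have "exp (- (norm x ^ 2) / (2 * l ^ 2)) = (\<Prod>b\<in>Basis. exp (- ((x \<bullet> b) ^ 2) / (2 * l ^ 2)))"
    by (simp add: sum_divide_distrib[symmetric] exp_sum[symmetric] sum_negf)
  moreover have "(2 * pi * l ^ 2) powr (- real DIM('a) / 2) = (1 / sqrt (2 * pi * l ^ 2)) ^ DIM('a)"
    using assms by (intro powr_minus_half_eq_power) simp
  ultimately show ?thesis
    by (simp only: normal_density_def prod.distrib prod_constant diff_0_right)
qed

lemma prob_space_gaussian_measure:
  assumes "l > 0"
  shows "prob_space (gaussian_measure l :: 'a::euclidean_space measure)"
proof
  have "emeasure (gaussian_measure l :: 'a measure) (space (gaussian_measure l))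
      = (\<integral>\<^sup>+x. ennreal (\<Prod>b\<in>Basis. normal_density 0 l (x \<bullet> b)) \<partial>(lborel :: 'a measure))"
    unfolding gaussian_measure_def gaussian_density_eq_prod_normal_density[OF assms]
    by (simp add: emeasure_density)
  also have "\<dots> = (\<integral>\<^sup>+x. (\<Prod>b\<in>Basis. ennreal (normal_density 0 l (x \<bullet> b))) \<partial>(lborel :: 'a measure))"
    by (simp add: prod_ennreal)
  also have "\<dots> = (\<Prod>b\<in>(Basis::'a set). \<integral>\<^sup>+x. ennreal (normal_density 0 l x) \<partial>lborel)"
    by (rule nn_integral_lborel_prod) auto
  also have "(\<integral>\<^sup>+x. ennreal (normal_density 0 l x) \<partial>lborel) = 1"
    using assms by (subst nn_integral_eq_integral) auto
  finally show "emeasure (gaussian_measure l :: 'a measure) (space (gaussian_measure l)) = 1"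
    by simp
qed

lemma sets_gaussian_measure [measurable_cong, simp]:
  "sets (gaussian_measure l :: 'a::euclidean_space measure) = sets borel"
  by (simp add: gaussian_measure_def)

lemma borel_measurable_cis [measurable]:
  fixes f :: "'a \<Rightarrow> real"
  assumes "f \<in> borel_measurable M"
  shows "(\<lambda>x. cis (f x)) \<in> borel_measurable M"
  using borel_measurable_continuous_onI[OF continuous_on_cis[OF continuous_on_id]] assms
  by measurable

lemma fourier_damp_eq_gaussian_expectation:
  fixes f :: "'a::euclidean_space \<Rightarrow> real"
  assumes "l > 0" and [measurable]: "f \<in> borel_measurable borel"
  shows "fourier (\<lambda>x. complex_of_real (damp l f x)) y =
     of_real (l ^ DIM('a)) * (\<integral>x. of_real (f x) * cis (- (y \<bullet> x)) \<partial>gaussian_measure l)"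
proof -
  define c where "c = (2 * pi * l ^ 2) powr (- real DIM('a) / 2)"
  have "(\<integral>x. of_real (f x) * cis (- (y \<bullet> x)) \<partial>gaussian_measure l)
      = (\<integral>x. of_real c * (cis (- (y \<bullet> x)) * of_real (damp l f x)) \<partial>lborel)"
    unfolding gaussian_measure_def
    by (subst integral_density)
      (auto simp: c_def damp_def scaleR_conv_of_real mult_ac intro!: Bochner_Integration.integral_cong)
  also have "\<dots> = of_real c * (LINT x|lborel. cis (- (y \<bullet> x)) * of_real (damp l f x))"
    by (rule integral_mult_right_zero)
  finally have expectation_eq: "(\<integral>x. of_real (f x) * cis (- (y \<bullet> x)) \<partial>gaussian_measure l)
      = of_real c * (LINT x|lborel. cis (- (y \<bullet> x)) * of_real (damp l f x))" .
  have constant_eq: "l ^ DIM('a) * c = (2 * pi) powr (- real DIM('a) / 2)"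
    unfolding c_def using assms
    by (simp only: powr_minus_half_eq_power pi_gt_zero mult_pos_pos zero_less_power)
      (simp add: real_sqrt_mult power_mult_distrib[symmetric])
  show ?thesis
    unfolding fourier_def expectation_eq constant_eq[symmetric] of_real_mult by (simp only: mult.assoc)
qed

lemma indep_vars_PiM_components:
  assumes M: "prob_space M" and "I \<noteq> {}"
  shows "prob_space.indep_vars (\<Pi>\<^sub>M i\<in>I. M) (\<lambda>_. M) (\<lambda>i xs. xs i) I"
proof -
  define P where "P = (\<Pi>\<^sub>M i\<in>I. M)"
  interpret P: prob_space P
    unfolding P_def using M by (intro prob_space_PiM)
  have "distr P (\<Pi>\<^sub>M i\<in>I. M) (\<lambda>xs. \<lambda>i\<in>I. xs i) = distr P P (\<lambda>xs. xs)"
    by (rule distr_cong) (auto simp: P_def space_PiM PiE_restrict)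
  also have "\<dots> = P"
    by simp
  also have "\<dots> = (\<Pi>\<^sub>M i\<in>I. distr P M (\<lambda>xs. xs i))"
    unfolding P_def by (rule PiM_cong) (auto intro!: distr_PiM_component[symmetric] M)
  finally show ?thesis
    unfolding P_def using \<open>I \<noteq> {}\<close>
    by (subst P.indep_vars_iff_distr_eq_PiM'[unfolded P_def]) auto
qed

lemma Hoeffding_PiM_sample_mean:
  fixes h :: "'a \<Rightarrow> real"
  assumes M: "prob_space M" and I: "finite I" "I \<noteq> {}"
    and h [measurable]: "h \<in> borel_measurable M"
    and h_bounds: "\<And>x. x \<in> space M \<Longrightarrow> h x \<in> {a..b}"
    and "a < b" "\<epsilon> \<ge> 0"
  defines "P \<equiv> \<Pi>\<^sub>M i\<in>I. M"
  shows "measure P {xs \<in> space P.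
           \<bar>(\<Sum>i\<in>I. h (xs i)) / real (card I) - prob_space.expectation M h\<bar> \<ge> \<epsilon>}
         \<le> 2 * exp (- 2 * real (card I) * \<epsilon>\<^sup>2 / (b - a)\<^sup>2)"
proof -
  interpret M: prob_space M by (rule M)
  interpret P: prob_space P
    unfolding P_def using M by (intro prob_space_PiM)
  obtain i\<^sub>0 where "i\<^sub>0 \<in> I" using I by blast
  have component [measurable]: "(\<lambda>xs. xs i) \<in> measurable P M" if "i \<in> I" for i
    unfolding P_def using that by measurable
  have distr_component: "distr P M (\<lambda>xs. xs i) = M" if "i \<in> I" for i
    unfolding P_def using M that by (intro distr_PiM_component)
  have distr_h: "distr P borel (\<lambda>xs. h (xs i)) = distr M borel h" if "i \<in> I" for i
    using distr_distr[OF h component[OF that], symmetric] distr_component[OF that]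
    by (simp add: comp_def)
  have expectation_h: "P.expectation (\<lambda>xs. h (xs i\<^sub>0)) = M.expectation h"
    using integral_distr[OF component[OF \<open>i\<^sub>0 \<in> I\<close>], of h] distr_component[OF \<open>i\<^sub>0 \<in> I\<close>]
    by simp
  interpret Hoeffding_ineq_iid P I "\<lambda>i xs. h (xs i)" "\<lambda>xs. h (xs i\<^sub>0)" a b
    "P.expectation (\<lambda>xs. h (xs i\<^sub>0))"
  proof unfold_locales
    show "P.indep_vars (\<lambda>_. borel) (\<lambda>i xs. h (xs i)) I"
      using P.indep_vars_compose2[OF indep_vars_PiM_components[OF M \<open>I \<noteq> {}\<close>, folded P_def],
          of "\<lambda>_. h"]
      by simp
    show "AE xs in P. h (xs i\<^sub>0) \<in> {a..b}"
      using h_bounds measurable_space[OF component[OF \<open>i\<^sub>0 \<in> I\<close>]] by simp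
  qed (use I \<open>i\<^sub>0 \<in> I\<close> distr_h in simp_all)
  show ?thesis
    using Hoeffding_ineq_abs_ge'[OF \<open>\<epsilon> \<ge> 0\<close> \<open>a < b\<close> \<open>I \<noteq> {}\<close>] by (simp add: expectation_h)
qed

lemma Hoeffding_PiM_complex_sample_mean:
  fixes g :: "'a \<Rightarrow> complex"
  assumes M: "prob_space M" and I: "finite I" "I \<noteq> {}"
    and g [measurable]: "g \<in> borel_measurable M"
    and g_bound: "\<And>x. x \<in> space M \<Longrightarrow> cmod (g x) \<le> 1"
    and "s \<ge> 0"
  defines "P \<equiv> \<Pi>\<^sub>M i\<in>I. M"
  shows "measure P {xs \<in> space P.
           cmod ((\<Sum>i\<in>I. g (xs i)) / of_nat (card I) - prob_space.expectation M g) \<ge> 2 * s}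
         \<le> 4 * exp (- real (card I) * s\<^sup>2 / 2)"
proof -
  interpret M: prob_space M by (rule M)
  interpret P: prob_space P
    unfolding P_def using M by (intro prob_space_PiM)
  have [measurable]: "(\<lambda>xs. xs i) \<in> measurable P M" if "i \<in> I" for i
    unfolding P_def using that by measurable
  define Z where "Z xs = (\<Sum>i\<in>I. g (xs i)) / of_nat (card I) - M.expectation g" for xs
  have "integrable M g"
    using g_bound by (intro M.integrable_const_bound[where B = 1]) auto
  then have Re_Z: "Re (Z xs) = (\<Sum>i\<in>I. Re (g (xs i))) / real (card I) - M.expectation (\<lambda>x. Re (g x))"
    and Im_Z: "Im (Z xs) = (\<Sum>i\<in>I. Im (g (xs i))) / real (card I) - M.expectation (\<lambda>x. Im (g x))"
    for xs
    by (simp_all add: Z_def Re_sum Im_sum)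
  define deviates where "deviates h = {xs \<in> space P.
      \<bar>(\<Sum>i\<in>I. h (xs i)) / real (card I) - M.expectation h\<bar> \<ge> s}" for h
  have [measurable]: "deviates (\<lambda>x. Re (g x)) \<in> sets P" "deviates (\<lambda>x. Im (g x)) \<in> sets P"
    unfolding deviates_def by measurable
  have Hoeffding_part: "P.prob (deviates h) \<le> 2 * exp (- real (card I) * s\<^sup>2 / 2)"
    if [measurable]: "h \<in> borel_measurable M" and "\<And>x. x \<in> space M \<Longrightarrow> h x \<in> {-1..1}" for h
    using Hoeffding_PiM_sample_mean[OF M I that _ \<open>s \<ge> 0\<close>, folded P_def]
    by (simp add: deviates_def)
  have "{xs \<in> space P. cmod (Z xs) \<ge> 2 * s} \<subseteq> deviates (\<lambda>x. Re (g x)) \<union> deviates (\<lambda>x. Im (g x))"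
  proof (intro subsetI)
    fix xs
    assume "xs \<in> {xs \<in> space P. cmod (Z xs) \<ge> 2 * s}"
    then have "xs \<in> space P" and "s \<le> \<bar>Re (Z xs)\<bar> \<or> s \<le> \<bar>Im (Z xs)\<bar>"
      using cmod_le[of "Z xs"] by auto
    then show "xs \<in> deviates (\<lambda>x. Re (g x)) \<union> deviates (\<lambda>x. Im (g x))"
      by (auto simp: deviates_def Re_Z Im_Z)
  qed
  then have "P.prob {xs \<in> space P. cmod (Z xs) \<ge> 2 * s}
      \<le> P.prob (deviates (\<lambda>x. Re (g x))) + P.prob (deviates (\<lambda>x. Im (g x)))"
    by (intro order.trans[OF P.finite_measure_mono measure_Un_le]) auto
  also have "\<dots> \<le> 2 * exp (- real (card I) * s\<^sup>2 / 2) + 2 * exp (- real (card I) * s\<^sup>2 / 2)"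
  proof (intro add_mono)
    have Re_Im_bounds: "Re (g x) \<in> {-1..1}" "Im (g x) \<in> {-1..1}" if "x \<in> space M" for x
      using g_bound[OF that] abs_Re_le_cmod[of "g x"] abs_Im_le_cmod[of "g x"] by auto
    show "P.prob (deviates (\<lambda>x. Re (g x))) \<le> 2 * exp (- real (card I) * s\<^sup>2 / 2)"
      by (rule Hoeffding_part) (measurable, use Re_Im_bounds in blast)
    show "P.prob (deviates (\<lambda>x. Im (g x))) \<le> 2 * exp (- real (card I) * s\<^sup>2 / 2)"
      by (rule Hoeffding_part) (measurable, use Re_Im_bounds in blast)
  qed
  finally show ?thesis
    by (simp add: Z_def)
qed

lemma norm_estimator_error_le:
  fixes f fs :: "'a::euclidean_space \<Rightarrow> real"
  assumes approx: "\<forall>x. \<bar>f x - fs x\<bar> \<le> \<epsilon>" and "m > 0"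
  shows "cmod (estimator l fs y m xs - of_real (l ^ DIM('a)) * \<mu>)
    \<le> \<bar>l\<bar> ^ DIM('a) * (\<epsilon> + cmod ((\<Sum>j<m. of_real (f (xs j)) * cis (- (y \<bullet> xs j))) / of_nat m - \<mu>))"
proof -
  define D where "D = (\<Sum>j<m. of_real (fs (xs j) - f (xs j)) * cis (- (y \<bullet> xs j))) / of_nat m"
  define T where "T = (\<Sum>j<m. of_real (f (xs j)) * cis (- (y \<bullet> xs j))) / (of_nat m :: complex)"
  have "cmod (\<Sum>j<m. of_real (fs (xs j) - f (xs j)) * cis (- (y \<bullet> xs j))) \<le> (\<Sum>j<m. \<epsilon>)"
    using approx by (intro sum_norm_le) (simp add: norm_mult abs_minus_commute flip: of_real_diff)
  then have "cmod D \<le> \<epsilon>"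
    using \<open>m > 0\<close> by (simp add: D_def norm_divide field_simps)
  have "estimator l fs y m xs - of_real (l ^ DIM('a)) * \<mu> = of_real (l ^ DIM('a)) * (D + (T - \<mu>))"
    unfolding estimator_def D_def T_def
    by (simp add: algebra_simps sum.distrib[symmetric] add_divide_distrib[symmetric])
  also have "cmod \<dots> \<le> \<bar>l\<bar> ^ DIM('a) * (\<epsilon> + cmod (T - \<mu>))"
  proof -
    have "cmod (D + (T - \<mu>)) \<le> \<epsilon> + cmod (T - \<mu>)"
      using \<open>cmod D \<le> \<epsilon>\<close> norm_triangle_ineq[of D "T - \<mu>"] by linarith
    then show ?thesis
      by (simp add: norm_mult norm_power mult_left_mono)
  qed
  finally show ?thesis
    by (simp add: T_def)
qed

lemma estimator_error_tail_bound:
  fixes f fs :: "'a::euclidean_space \<Rightarrow> real"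
  assumes f_meas [measurable]: "f \<in> borel_measurable borel"
    and fs_meas [measurable]: "fs \<in> borel_measurable borel"
    and f_bound: "\<forall>x. \<bar>f x\<bar> \<le> 1" and "l > 0"
    and approx: "\<forall>x. \<bar>f x - fs x\<bar> \<le> \<epsilon>" and "m > 0" and "s \<ge> 0"
    and threshold: "l ^ DIM('a) * (\<epsilon> + 2 * s) \<le> t"
  defines "P \<equiv> \<Pi>\<^sub>M j\<in>{..<m}. gaussian_measure l"
  shows "measure P {xs \<in> space P.
           cmod (estimator l fs y m xs - fourier (\<lambda>x. of_real (damp l f x)) y) \<le> t}
         \<ge> 1 - 4 * exp (- real m * s\<^sup>2 / 2)"
proof -
  define G where "G = (gaussian_measure l :: 'a measure)"
  define g where "g x = of_real (f x) * cis (- (y \<bullet> x))" for x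
  define mean_deviation where
    "mean_deviation xs = cmod ((\<Sum>j<m. g (xs j)) / of_nat m - prob_space.expectation G g)" for xs
  interpret G: prob_space G
    unfolding G_def using \<open>l > 0\<close> by (rule prob_space_gaussian_measure)
  interpret P: prob_space P
    unfolding P_def by (intro prob_space_PiM prob_space_gaussian_measure \<open>l > 0\<close>)
  have g_meas [measurable]: "g \<in> borel_measurable G"
    unfolding g_def G_def by measurable
  have [measurable]: "(\<lambda>xs. xs j) \<in> borel_measurable P" if "j \<in> {..<m}" for j
    unfolding P_def using that by measurable
  have "P.prob {xs \<in> space P. mean_deviation xs \<ge> 2 * s} \<le> 4 * exp (- real m * s\<^sup>2 / 2)"
    using Hoeffding_PiM_complex_sample_mean[OF G.prob_space_axioms _ _ g_meas _ \<open>s \<ge> 0\<close>, of "{..<m}"]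
      \<open>m > 0\<close> f_bound
    by (simp add: P_def G_def mean_deviation_def g_def norm_mult lessThan_empty_iff)
  moreover have "cmod (estimator l fs y m xs - fourier (\<lambda>x. of_real (damp l f x)) y) \<le> t"
    if "mean_deviation xs < 2 * s" for xs
  proof -
    have "fourier (\<lambda>x. of_real (damp l f x)) y = of_real (l ^ DIM('a)) * G.expectation g"
      unfolding G_def g_def using \<open>l > 0\<close> f_meas by (rule fourier_damp_eq_gaussian_expectation)
    then have "cmod (estimator l fs y m xs - fourier (\<lambda>x. of_real (damp l f x)) y)
        \<le> l ^ DIM('a) * (\<epsilon> + mean_deviation xs)"
      using norm_estimator_error_le[OF approx \<open>m > 0\<close>, of l y xs "G.expectation g"] \<open>l > 0\<close>
      by (simp add: mean_deviation_def g_def)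
    also have "\<dots> \<le> l ^ DIM('a) * (\<epsilon> + 2 * s)"
      using that \<open>l > 0\<close> by (intro mult_left_mono) auto
    finally show ?thesis
      using threshold by linarith
  qed
  then have "P.prob {xs \<in> space P. \<not> mean_deviation xs \<ge> 2 * s}
      \<le> P.prob {xs \<in> space P. cmod (estimator l fs y m xs - fourier (\<lambda>x. of_real (damp l f x)) y) \<le> t}"
    by (intro P.finite_measure_mono) (auto simp: not_le estimator_def)
  moreover have "P.prob {xs \<in> space P. \<not> mean_deviation xs \<ge> 2 * s}
      = 1 - P.prob {xs \<in> space P. mean_deviation xs \<ge> 2 * s}"
    unfolding mean_deviation_def g_def by (rule P.prob_neg) measurable
  ultimately show ?thesis
    by linarith
qed

theorem claim7p1:
  fixes f fs :: "'a::euclidean_space \<Rightarrow> real"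
    and l \<epsilon> \<delta> :: real and y :: 'a and m :: nat
  assumes f_meas: "f \<in> borel_measurable borel"
    and fs_meas: "fs \<in> borel_measurable borel"
    and f_bound: "\<forall>x. \<bar>f x\<bar> \<le> 1"
    and l_pos: "l > 0"
    and approx: "\<forall>x. \<bar>f x - fs x\<bar> \<le> \<epsilon>"
    and m_pos: "m \<ge> 1"
    and \<delta>_pos: "0 < \<delta>" and \<delta>_lt: "\<delta> < 1"
  shows "measure (PiM {..<m} (\<lambda>_. gaussian_measure l))
           {xs \<in> space (PiM {..<m} (\<lambda>_. gaussian_measure l)).
              cmod (estimator l fs y m xs - fourier (\<lambda>x. complex_of_real (damp l f x)) y)
                \<le> 4 * l ^ DIM('a) * (\<epsilon> + sqrt (2 * ln (8 / \<delta>) / real m))}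
         \<ge> 1 - \<delta>"
proof -
  define s where "s = sqrt (2 * ln (8 / \<delta>) / real m)"
  have "0 \<le> \<epsilon>" "0 \<le> s" "real m * s\<^sup>2 / 2 = ln (8 / \<delta>)"
    using approx m_pos \<delta>_pos \<delta>_lt by (auto simp: s_def intro: order.trans[OF abs_ge_zero])
  then have "1 - \<delta> \<le> 1 - 4 * exp (- real m * s\<^sup>2 / 2)"
    using \<delta>_pos by (simp add: exp_minus)
  also have "\<dots> \<le> measure (PiM {..<m} (\<lambda>_. gaussian_measure l))
           {xs \<in> space (PiM {..<m} (\<lambda>_. gaussian_measure l)).
              cmod (estimator l fs y m xs - fourier (\<lambda>x. complex_of_real (damp l f x)) y)
                \<le> 4 * l ^ DIM('a) * (\<epsilon> + s)}"
    using \<open>0 \<le> \<epsilon>\<close> \<open>0 \<le> s\<close> l_pos m_pos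
    by (intro estimator_error_tail_bound[OF f_meas fs_meas f_bound l_pos approx]) (auto simp: algebra_simps)
  finally show ?thesis
    unfolding s_def .
qed

end
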